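(* Let $(y^*, \mathbf{X}^*, \mathbf{Z}^* )$ be a random triple with $y^*\in\{0,1\}$, $\mathbf{X}^*\in\mathbb{R}^{1\times p}$ and $\mathbf{Z}^*\in\mathbb{R}^{1\times q}$ (row vectors), following the conditional mixture model: for $j\in\{0,1\}$, $$\mathbf{X}^*\mid (y^*=j,\mathbf{Z}^* ) \sim N(\boldsymbol\mu_j + \mathbf{Z}^*\mathbf{C},\ \boldsymbol\Sigma),\qquad P(y^*=1\mid \mathbf{Z}^* )=\frac{\exp(\gamma_0+\mathbf{Z}^*\boldsymbol\gamma_1)}{1+\exp(\gamma_0+\mathbf{Z}^*\boldsymbol\gamma_1)},$$ where $\boldsymbol\mu_0,\boldsymbol\mu_1\in\mathbb{R}^{1\times p}$, $\mathbf{C}\in\mathbb{R}^{q\times p}$, $\boldsymbol\Sigma\in\mathbb{R}^{p\times p}$ is positive definite, $\gamma_0\in\mathbb{R}$, $\boldsymbol\gamma_1\in\mathbb{R}^{q\times1}$. Assume $\mathbf{Z}^*$ has finite mean and finite nonsingular covariance matrix, and that $\mathbf{W}^*=(\mathbf{X}^*,\mathbf{Z}^* )\in\mathbb{R}^{1\times(p+q)}$ has nonsingular covariance matrix. Define $\bar{\mathbf{b}}=[\mathrm{Var}(\mathbf{W}^* )]^{-1}\mathrm{Cov}(\mathbf{W}^*,y^* )\in\mathbb{R}^{(p+q)\times 1}$, write $\bar{\mathbf{b}}=(\bar{\mathbf{b}}_1^\top,\bar{\mathbf{b}}_2^\top)^\top$ with $\bar{\mathbf{b}}_1\in\mathbb{R}^{p\times1}$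 the coefficients associated with $\mathbf{X}^*$, and let $\varepsilon=y^*-\mathbf{W}^*\bar{\mathbf{b}}$. Let $\boldsymbol\beta_1=\boldsymbol\Sigma^{-1}(\boldsymbol\mu_1-\boldsymbol\mu_0)^\top$. Then, provided $\mathrm{Var}(\varepsilon)>0$, $$\boldsymbol\beta_1=[\mathrm{Var}(\varepsilon)]^{-1}\,\bar{\mathbf{b}}_1 .$$
   Context: For random row vectors $\mathbf{V}_1,\mathbf{V}_2$, $\mathrm{Cov}(\mathbf{V}_1,\mathbf{V}_2)=E[\{\mathbf{V}_1-E\mathbf{V}_1\}^\top\{\mathbf{V}_2-E\mathbf{V}_2\}]$ and $\mathrm{Var}(\mathbf{V}_1)=\mathrm{Cov}(\mathbf{V}_1,\mathbf{V}_1)$. The vector $\boldsymbol\beta_1$ is the coefficient of $\mathbf{X}^*$ in the logistic model $P(y^*=1\mid\mathbf{Z}^*,\mathbf{X}^* )$ implied by the conditional mixture model. *)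

theory Defs
  imports "HOL-Probability.Probability"
begin

text \<open>Row vectors in R^(1 x n) are modelled as elements of real^'n; a matrix in
  R^(m x n) is real^'n^'m (m rows, n columns).  Z C is  z v* C.\<close>

definition logistic :: "real \<Rightarrow> real" where
  "logistic t = exp t / (1 + exp t)"

definition pos_def_mat :: "real^'n^'n \<Rightarrow> bool" where
  "pos_def_mat S \<longleftrightarrow> transpose S = S \<and> (\<forall>x. x \<noteq> 0 \<longrightarrow> x \<bullet> (S *v x) > 0)"

definition mvn_density :: "real^'n^'n \<Rightarrow> real^'n \<Rightarrow> real^'n \<Rightarrow> real" where
  "mvn_density S m x =
     exp (- ((x - m) \<bullet> (matrix_inv S *v (x - m))) / 2)
       / sqrt ((2 * pi) ^ CARD('n) * det S)"

definition mvn :: "real^'n^'n \<Rightarrow> real^'n \<Rightarrow> (real^'n) measure" where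
  "mvn S m = density lborel (\<lambda>x. ennreal (mvn_density S m x))"

definition cov_mat :: "'w measure \<Rightarrow> ('w \<Rightarrow> real^'a) \<Rightarrow> ('w \<Rightarrow> real^'b) \<Rightarrow> real^'b^'a" where
  "cov_mat M U V = (\<chi> i j. prob_space.expectation M
      (\<lambda>w. (U w $ i - prob_space.expectation M (\<lambda>v. U v $ i)) *
           (V w $ j - prob_space.expectation M (\<lambda>v. V v $ j))))"

definition cov_vec :: "'w measure \<Rightarrow> ('w \<Rightarrow> real^'a) \<Rightarrow> ('w \<Rightarrow> real) \<Rightarrow> real^'a" where
  "cov_vec M U y = (\<chi> i. prob_space.expectation M
      (\<lambda>w. (U w $ i - prob_space.expectation M (\<lambda>v. U v $ i)) *
           (y w - prob_space.expectation M y)))"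

definition vconcat :: "real^'p \<Rightarrow> real^'q \<Rightarrow> real^('p + 'q)" where
  "vconcat x z = (\<chi> i. case i of Inl k \<Rightarrow> x $ k | Inr k \<Rightarrow> z $ k)"

end

theory Submission
  imports Defs "HOL-Real_Asymp.Real_Asymp"
begin

text \<open>Write \<open>X = \<mu>0 + y (\<mu>1 - \<mu>0) + Z C + U\<close>. The model makes the noise \<open>U\<close> distributed as
  \<open>N(0, \<Sigma>)\<close> and independent of \<open>(Z, y)\<close>, so \<open>Cov(U, X) = \<Sigma>\<close> while \<open>U\<close> is uncorrelated with
  \<open>y\<close> and \<open>Z\<close>. The least-squares residual \<open>\<epsilon> = y - W b\<close> is uncorrelated with \<open>X\<close> and \<open>Z\<close>,
  and \<open>Cov(\<epsilon>, y) = Var \<epsilon>\<close>. Hence \<open>Cov(U, \<epsilon>) = - \<Sigma> b1\<close>, and expanding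
  \<open>0 = Cov(\<epsilon>, X) = Cov(\<epsilon>, U) + Var(\<epsilon>) (\<mu>1 - \<mu>0)\<close> gives \<open>\<Sigma> b1 = Var(\<epsilon>) (\<mu>1 - \<mu>0)\<close>.
  The Gaussian moments are read off the moment generating function.\<close>

section \<open>Hyperbolic inequalities\<close>

lemma sinh_le_mult_cosh:
  fixes u :: real assumes "0 \<le> u" shows "sinh u \<le> u * cosh u"
proof -
  have "(\<lambda>x. x * cosh x - sinh x) 0 \<le> (\<lambda>x. x * cosh x - sinh (x::real)) u"
  proof (rule DERIV_nonneg_imp_nondecreasing[OF assms])
    fix x :: real assume "0 \<le> x"
    then show "\<exists>d. ((\<lambda>x. x * cosh x - sinh x) has_real_derivative d) (at x) \<and> 0 \<le> d"
      by (intro exI[of _ "x * sinh x"] conjI) (auto intro!: derivative_eq_intros)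
  qed
  then show ?thesis by simp
qed

lemma cosh_minus_one_le_mult_sinh:
  fixes u :: real assumes "0 \<le> u" shows "cosh u - 1 \<le> u * sinh u"
proof -
  have "(\<lambda>x. x * sinh x - cosh x) 0 \<le> (\<lambda>x. x * sinh x - cosh (x::real)) u"
  proof (rule DERIV_nonneg_imp_nondecreasing[OF assms])
    fix x :: real assume "0 \<le> x"
    then show "\<exists>d. ((\<lambda>x. x * sinh x - cosh x) has_real_derivative d) (at x) \<and> 0 \<le> d"
      by (intro exI[of _ "x * cosh x"] conjI) (auto intro!: derivative_eq_intros)
  qed
  then show ?thesis by simp
qed

lemma one_plus_half_sq_le_cosh:
  fixes u :: real assumes "0 \<le> u" shows "1 + u\<^sup>2 / 2 \<le> cosh u"
proof -
  have "(\<lambda>x. cosh x - x\<^sup>2 / 2) 0 \<le> (\<lambda>x. cosh x - x\<^sup>2 / (2::real)) u"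
  proof (rule DERIV_nonneg_imp_nondecreasing[OF assms])
    fix x :: real assume "0 \<le> x"
    then have "x \<le> sinh x" using real_le_x_sinh[of x] by (simp add: sinh_field_def exp_minus)
    then show "\<exists>d. ((\<lambda>x. cosh x - x\<^sup>2 / 2) has_real_derivative d) (at x) \<and> 0 \<le> d"
      by (intro exI[of _ "sinh x - x"] conjI) (auto intro!: derivative_eq_intros)
  qed
  then show ?thesis by simp
qed

lemma cosh_minus_one_le_sq_mult_cosh: "cosh u - 1 \<le> u\<^sup>2 * cosh (u::real)"
proof -
  have "cosh (\<bar>u\<bar>) - 1 \<le> \<bar>u\<bar> * sinh (\<bar>u\<bar>)" by (rule cosh_minus_one_le_mult_sinh) simp
  also have "\<dots> \<le> \<bar>u\<bar> * (\<bar>u\<bar> * cosh \<bar>u\<bar>)" by (intro mult_left_mono sinh_le_mult_cosh) auto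
  finally show ?thesis by (simp add: power2_eq_square)
qed

lemma sq_le_two_cosh: "u\<^sup>2 \<le> 2 * cosh (u::real)"
  using one_plus_half_sq_le_cosh[of "\<bar>u\<bar>"] by simp

lemma cosh_le_cosh_abs: "\<bar>u\<bar> \<le> \<bar>v\<bar> \<Longrightarrow> cosh u \<le> cosh (v::real)"
  using cosh_real_nonneg_le_iff[of "\<bar>u\<bar>" "\<bar>v\<bar>"] by simp

lemma scaled_cosh_bound:
  fixes u k :: real assumes "1 \<le> k"
  shows "2 * k\<^sup>2 * (cosh (u / k) - 1) \<le> 2 * (cosh (2 * u) + 1)"
proof -
  have "2 * k\<^sup>2 * (cosh (u / k) - 1) \<le> 2 * k\<^sup>2 * ((u / k)\<^sup>2 * cosh (u / k))"
    by (intro mult_left_mono cosh_minus_one_le_sq_mult_cosh) simp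
  also have "\<dots> = 2 * u\<^sup>2 * cosh (u / k)"
    using assms by (simp add: power_divide)
  also have "\<dots> \<le> 2 * u\<^sup>2 * cosh u"
    using assms by (intro mult_left_mono cosh_le_cosh_abs) (auto simp: abs_div divide_le_eq mult_le_cancel_left1)
  also have "\<dots> \<le> 2 * (2 * cosh u) * cosh u"
    by (intro mult_right_mono mult_left_mono sq_le_two_cosh) auto
  also have "\<dots> = 2 * (cosh (2 * u) + 1)"
    by (simp add: cosh_double_cosh power2_eq_square)
  finally show ?thesis .
qed

section \<open>Positive definite matrices and normal densities\<close>

lemma matrix_inv_mult:
  fixes A :: "real^'n^'n" assumes "invertible A"
  shows "A ** matrix_inv A = mat 1" "matrix_inv A ** A = mat 1"
proof -
  have "\<exists>A'. A ** A' = mat 1 \<and> A' ** A = mat 1" using assms unfolding invertible_def by blast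
  then have "A ** matrix_inv A = mat 1 \<and> matrix_inv A ** A = mat 1"
    unfolding matrix_inv_def by (rule someI_ex)
  then show "A ** matrix_inv A = mat 1" "matrix_inv A ** A = mat 1" by auto
qed

lemma matrix_inv_mult_vector:
  fixes A :: "real^'n^'n" assumes "invertible A"
  shows "A *v (matrix_inv A *v x) = x" "matrix_inv A *v (A *v x) = x"
  using matrix_inv_mult[OF assms] by (simp_all add: matrix_vector_mul_assoc)

lemma pos_def_mat_invertible:
  fixes S :: "real^'n^'n" assumes "pos_def_mat S" shows "invertible S"
proof -
  have "S *v x = 0 \<Longrightarrow> x = 0" for x
    using assms unfolding pos_def_mat_def by (metis inner_zero_right less_irrefl)
  then obtain B where B: "B ** S = mat 1" using matrix_left_invertible_ker by blast
  then have "S ** B = mat 1" using matrix_left_right_inverse by blast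
  with B show ?thesis unfolding invertible_def by blast
qed

lemma pos_def_mat_transpose_matrix_inv:
  fixes S :: "real^'n^'n" assumes "pos_def_mat S"
  shows "transpose (matrix_inv S) = matrix_inv S"
proof -
  note inv = matrix_inv_mult[OF pos_def_mat_invertible[OF assms]]
  have "S ** transpose (matrix_inv S) = mat 1"
    using assms inv(2) unfolding pos_def_mat_def by (metis matrix_transpose_mul transpose_mat)
  then have "matrix_inv S ** (S ** transpose (matrix_inv S)) = matrix_inv S"
    by simp
  then show ?thesis by (simp add: matrix_mul_assoc inv(2))
qed

lemma inner_matrix_vector_sym:
  fixes A :: "real^'n^'n" assumes "transpose A = A"
  shows "x \<bullet> (A *v y) = y \<bullet> (A *v x)"
  by (metis assms dot_lmul_matrix inner_commute transpose_matrix_vector)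

lemma pos_def_mat_complete_square:
  fixes S :: "real^'n^'n" assumes "pos_def_mat S"
  shows "(x - S *v a) \<bullet> (matrix_inv S *v (x - S *v a))
      = x \<bullet> (matrix_inv S *v x) - 2 * (a \<bullet> x) + a \<bullet> (S *v a)"
proof -
  have a: "matrix_inv S *v (S *v a) = a"
    by (rule matrix_inv_mult_vector(2)[OF pos_def_mat_invertible[OF assms]])
  then have "(S *v a) \<bullet> (matrix_inv S *v x) = a \<bullet> x"
    using inner_matrix_vector_sym[OF pos_def_mat_transpose_matrix_inv[OF assms], of "S *v a" x]
    by (simp add: inner_commute)
  with a show ?thesis
    by (simp add: matrix_vector_mult_diff_distrib inner_diff_left inner_diff_right inner_commute[of _ a])
qed

lemma sets_mvn [simp, measurable_cong]: "sets (mvn S m) = sets borel"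
  and space_mvn [simp]: "space (mvn S m) = UNIV"
  by (simp_all add: mvn_def)

lemma borel_measurable_mvn_density [measurable]: "mvn_density S m \<in> borel_measurable borel"
  unfolding mvn_density_def divide_inverse[of "exp _"]
  by (intro borel_measurable_continuous_onI continuous_intros
      continuous_on_compose2[OF matrix_vector_mult_linear_continuous_on]) auto

lemma mvn_eq_distr_shift: "mvn S m = distr (mvn S 0) borel ((+) m)"
proof (rule measure_eqI)
  have shift: "mvn_density S m (m + u) = mvn_density S 0 u" for u
    by (simp add: mvn_density_def)
  fix A assume "A \<in> sets (mvn S m)"
  then have [measurable]: "A \<in> sets borel" by simp
  have "emeasure (mvn S m) A = (\<integral>\<^sup>+x. ennreal (mvn_density S m x) * indicator A x \<partial>lborel)"
    unfolding mvn_def by (subst emeasure_density) auto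
  also have "\<dots> = (\<integral>\<^sup>+x. ennreal (mvn_density S m x) * indicator A x \<partial>distr lborel borel ((+) m))"
    by (simp add: lborel_distr_plus)
  also have "\<dots> = (\<integral>\<^sup>+u. ennreal (mvn_density S 0 u) * indicator ((+) m -` A) u \<partial>lborel)"
    by (subst nn_integral_distr) (auto simp: shift indicator_def)
  also have "\<dots> = emeasure (distr (mvn S 0) borel ((+) m)) A"
    using measurable_sets[of "(+) m" borel borel A]
    unfolding mvn_def by (subst emeasure_distr, simp_all, subst emeasure_density) auto
  finally show "emeasure (mvn S m) A = emeasure (distr (mvn S 0) borel ((+) m)) A" .
qed simp

lemma borel_measurable_vec_nth [measurable (raw)]:
  "f \<in> borel_measurable M \<Longrightarrow> (\<lambda>x. (f x :: real^'n) $ i) \<in> borel_measurable M"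
  by (rule measurable_compose[of _ _ borel], assumption)
     (simp only: cart_eq_inner_axis, intro borel_measurable_continuous_onI continuous_intros)

section \<open>Covariance and least squares\<close>

context prob_space
begin

definition square_integrable :: "('a \<Rightarrow> real) \<Rightarrow> bool" where
  "square_integrable f \<longleftrightarrow> f \<in> borel_measurable M \<and> integrable M (\<lambda>w. (f w)\<^sup>2)"

definition covariance :: "('a \<Rightarrow> real) \<Rightarrow> ('a \<Rightarrow> real) \<Rightarrow> real" where
  "covariance f g = expectation (\<lambda>w. (f w - expectation f) * (g w - expectation g))"

lemma square_integrable_integrable: "square_integrable f \<Longrightarrow> integrable M f"
  unfolding square_integrable_def by (blast intro: square_integrable_imp_integrable)

lemma square_integrable_integrable_mult:
  assumes "square_integrable f" "square_integrable g"
  shows "integrable M (\<lambda>w. f w * g w)"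
proof (rule Bochner_Integration.integrable_bound)
  show "integrable M (\<lambda>w. (f w)\<^sup>2 + (g w)\<^sup>2)"
    using assms unfolding square_integrable_def by auto
  show "(\<lambda>w. f w * g w) \<in> borel_measurable M"
    using assms unfolding square_integrable_def by auto
  have "2 * \<bar>u * v\<bar> \<le> u\<^sup>2 + v\<^sup>2" for u v :: real
    using sum_squares_bound[of "\<bar>u\<bar>" "\<bar>v\<bar>"] by (simp add: abs_mult)
  then show "AE w in M. norm (f w * g w) \<le> norm ((f w)\<^sup>2 + (g w)\<^sup>2)"
    by (intro AE_I2) (smt (verit) real_norm_def zero_le_power2 abs_ge_zero)
qed

lemma square_integrable_const [intro]: "square_integrable (\<lambda>w. c)"
  unfolding square_integrable_def by simp

lemma square_integrable_add [intro]:
  assumes "square_integrable f" "square_integrable g"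
  shows "square_integrable (\<lambda>w. f w + g w)"
proof -
  have "integrable M (\<lambda>w. (f w)\<^sup>2 + (g w)\<^sup>2 + 2 * (f w * g w))"
    using assms square_integrable_integrable_mult[OF assms] unfolding square_integrable_def by auto
  then show ?thesis
    using assms unfolding square_integrable_def by (auto simp: power2_sum mult.assoc)
qed

lemma square_integrable_cmult [intro]:
  "square_integrable f \<Longrightarrow> square_integrable (\<lambda>w. c * f w)"
  unfolding square_integrable_def by (auto simp: power_mult_distrib)

lemma square_integrable_diff [intro]:
  assumes "square_integrable f" "square_integrable g"
  shows "square_integrable (\<lambda>w. f w - g w)"
proof -
  have "square_integrable (\<lambda>w. f w + (- 1) * g w)"
    by (intro square_integrable_add square_integrable_cmult assms)
  then show ?thesis by simp
qed

lemma square_integrable_sum [intro]: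
  "(\<And>l. l \<in> L \<Longrightarrow> square_integrable (g l)) \<Longrightarrow> square_integrable (\<lambda>w. \<Sum>l\<in>L. g l w)"
  by (induction L rule: infinite_finite_induct) auto

lemma covariance_eq:
  assumes "square_integrable f" "square_integrable g"
  shows "covariance f g = expectation (\<lambda>w. f w * g w) - expectation f * expectation g"
proof -
  note integrable = square_integrable_integrable[OF assms(1)] square_integrable_integrable[OF assms(2)]
    square_integrable_integrable_mult[OF assms]
  have "covariance f g = expectation (\<lambda>w. f w * g w - expectation g * f w - (expectation f * g w - expectation f * expectation g))"
    unfolding covariance_def by (simp add: algebra_simps)
  then show ?thesis using integrable by (simp add: prob_space)
qed

lemma covariance_commute: "covariance f g = covariance g f"
  unfolding covariance_def by (simp add: mult.commute)

lemma variance_eq_covariance: "variance f = covariance f f"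
  unfolding covariance_def by (simp add: power2_eq_square)

lemma covariance_add_right:
  assumes "square_integrable f" "square_integrable g" "square_integrable h"
  shows "covariance f (\<lambda>w. g w + h w) = covariance f g + covariance f h"
  using assms square_integrable_integrable square_integrable_integrable_mult
  by (simp add: covariance_eq square_integrable_add algebra_simps)

lemma covariance_cmult_right:
  assumes "square_integrable f" "square_integrable g"
  shows "covariance f (\<lambda>w. c * g w) = c * covariance f g"
proof -
  have "(\<lambda>w. f w * (c * g w)) = (\<lambda>w. c * (f w * g w))" by (simp add: algebra_simps)
  then show ?thesis
    using assms square_integrable_integrable square_integrable_integrable_mult
    by (simp add: covariance_eq square_integrable_cmult algebra_simps)
qed

lemma covariance_const_right:
  assumes "square_integrable f" shows "covariance f (\<lambda>w. c) = 0"
  using square_integrable_integrable[OF assms] by (simp add: covariance_eq assms square_integrable_const prob_space)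

lemma covariance_diff_right:
  assumes "square_integrable f" "square_integrable g" "square_integrable h"
  shows "covariance f (\<lambda>w. g w - h w) = covariance f g - covariance f h"
  using assms square_integrable_integrable square_integrable_integrable_mult
  by (simp add: covariance_eq square_integrable_diff algebra_simps)

lemma covariance_sum_right:
  assumes "square_integrable f" "\<And>l. l \<in> L \<Longrightarrow> square_integrable (g l)"
  shows "covariance f (\<lambda>w. \<Sum>l\<in>L. g l w) = (\<Sum>l\<in>L. covariance f (g l))"
  using assms(2)
proof (induction L rule: infinite_finite_induct)
  case (insert l L)
  then show ?case
    using assms(1) by (simp add: covariance_add_right square_integrable_sum)
qed (use assms(1) covariance_const_right in auto)

lemma cov_mat_nth: "cov_mat M U V $ i $ j = covariance (\<lambda>w. U w $ i) (\<lambda>w. V w $ j)"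
  and cov_vec_nth: "cov_vec M U y $ i = covariance (\<lambda>w. U w $ i) y"
  by (simp_all add: cov_mat_def cov_vec_def covariance_def)

lemma cov_vec_inner_right:
  assumes "\<And>i. square_integrable (\<lambda>w. U w $ i)" "\<And>j. square_integrable (\<lambda>w. V w $ j)"
  shows "cov_vec M U (\<lambda>w. V w \<bullet> b) = cov_mat M U V *v b"
proof -
  have "covariance (\<lambda>w. U w $ i) (\<lambda>w. \<Sum>j\<in>UNIV. b $ j * V w $ j)
      = (\<Sum>j\<in>UNIV. covariance (\<lambda>w. U w $ i) (\<lambda>w. V w $ j) * b $ j)" for i
    using assms by (simp add: covariance_sum_right covariance_cmult_right square_integrable_cmult mult.commute)
  then show ?thesis
    by (simp add: vec_eq_iff cov_vec_nth cov_mat_nth inner_vec_def matrix_vector_mult_def mult.commute)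
qed

lemma square_integrable_inner_right:
  "(\<And>l. square_integrable (\<lambda>w. W w $ l)) \<Longrightarrow> square_integrable (\<lambda>w. W w \<bullet> b)"
  unfolding inner_vec_def by (intro square_integrable_sum) (auto simp: mult.commute)

lemma cov_vec_diff_right:
  assumes "\<And>i. square_integrable (\<lambda>w. U w $ i)" "square_integrable f" "square_integrable g"
  shows "cov_vec M U (\<lambda>w. f w - g w) = cov_vec M U f - cov_vec M U g"
  using assms by (simp add: vec_eq_iff cov_vec_nth covariance_diff_right)

text \<open>Being uncorrelated with every component of \<open>W\<close>, the residual is uncorrelated with
  \<open>W \<bullet> b\<close>, whence \<open>Cov(\<epsilon>, y) = Cov(\<epsilon>, \<epsilon> + W \<bullet> b) = Var \<epsilon>\<close>.\<close>
lemma
  assumes W: "\<And>l. square_integrable (\<lambda>w. W w $ l)" and y: "square_integrable y"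
    and normal: "cov_mat M W W *v b = cov_vec M W y"
  defines "\<epsilon> \<equiv> \<lambda>w. y w - W w \<bullet> b"
  shows cov_vec_residual: "cov_vec M W \<epsilon> = 0"
    and covariance_residual_eq_variance: "covariance \<epsilon> y = variance \<epsilon>"
proof -
  have Wb: "square_integrable (\<lambda>w. W w \<bullet> b)" using W by (rule square_integrable_inner_right)
  then have \<epsilon>: "square_integrable \<epsilon>" unfolding \<epsilon>_def using y by (rule square_integrable_diff[rotated])
  show orth: "cov_vec M W \<epsilon> = 0"
    unfolding \<epsilon>_def using W y Wb by (simp add: cov_vec_diff_right cov_vec_inner_right normal)
  have "covariance \<epsilon> (\<lambda>w. W w \<bullet> b) = (\<Sum>l\<in>UNIV. b $ l * covariance \<epsilon> (\<lambda>w. W w $ l))"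
    using W \<epsilon> by (simp add: inner_vec_def covariance_sum_right covariance_cmult_right
        square_integrable_cmult mult.commute)
  also have "\<dots> = 0"
    using orth by (simp add: vec_eq_iff cov_vec_nth covariance_commute[of \<epsilon>])
  finally have "covariance \<epsilon> (\<lambda>w. W w \<bullet> b) = 0" .
  moreover have "y = (\<lambda>w. \<epsilon> w + W w \<bullet> b)" by (simp add: \<epsilon>_def)
  ultimately show "covariance \<epsilon> y = variance \<epsilon>"
    using \<epsilon> Wb by (simp add: covariance_add_right variance_eq_covariance)
qed

end

section \<open>Moments of a centred Gaussian\<close>

locale centered_gaussian =
  fixes S :: "real^'n^'n"
  assumes pos_def: "pos_def_mat S" and prob_space_mvn: "prob_space (mvn S 0)"
begin

sublocale prob_space "mvn S 0" by (rule prob_space_mvn)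

lemma borel_measurable_inner [measurable]: "(\<lambda>x. a \<bullet> x) \<in> borel_measurable borel"
  and borel_measurable_cosh [measurable]: "(cosh :: real \<Rightarrow> real) \<in> borel_measurable borel"
  by (intro borel_measurable_continuous_onI continuous_intros)+

lemma mvn_density_mult_exp_inner:
  "mvn_density S 0 x * exp (a \<bullet> x) = exp (a \<bullet> (S *v a) / 2) * mvn_density S (S *v a) x"
proof -
  let ?Q = "x \<bullet> (matrix_inv S *v x)" and ?c = "a \<bullet> (S *v a)"
  have "exp (- ?Q / 2) * exp (a \<bullet> x) = exp (?c / 2) * exp (- (?Q - 2 * (a \<bullet> x) + ?c) / 2)"
    unfolding exp_add[symmetric] by (rule arg_cong[where f=exp]) (simp add: field_simps)
  then show ?thesis
    unfolding mvn_density_def pos_def_mat_complete_square[OF pos_def] by (simp add: field_simps)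
qed

lemma nn_integral_exp_inner: "(\<integral>\<^sup>+x. exp (a \<bullet> x) \<partial>mvn S 0) = exp (a \<bullet> (S *v a) / 2)"
proof -
  have "(\<integral>\<^sup>+x. exp (a \<bullet> x) \<partial>mvn S 0) = (\<integral>\<^sup>+x. ennreal (mvn_density S 0 x * exp (a \<bullet> x)) \<partial>lborel)"
    unfolding mvn_def by (subst nn_integral_density) (auto simp: ennreal_mult'')
  also have "\<dots> = exp (a \<bullet> (S *v a) / 2) * (\<integral>\<^sup>+x. mvn_density S (S *v a) x \<partial>lborel)"
    unfolding mvn_density_mult_exp_inner by (subst nn_integral_cmult[symmetric]) (auto simp: ennreal_mult')
  also have "(\<integral>\<^sup>+x. mvn_density S (S *v a) x \<partial>lborel) = emeasure (mvn S (S *v a)) UNIV"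
    unfolding mvn_def by (subst emeasure_density) auto
  also have "\<dots> = 1"
    using emeasure_space_1 by (subst mvn_eq_distr_shift) (simp add: emeasure_distr)
  finally show ?thesis by simp
qed

lemma integrable_exp_inner: "integrable (mvn S 0) (\<lambda>x. exp (a \<bullet> x))"
  by (rule integrableI_nonneg) (auto simp: nn_integral_exp_inner)

lemma expectation_exp_inner: "expectation (\<lambda>x. exp (a \<bullet> x)) = exp (a \<bullet> (S *v a) / 2)"
  by (subst integral_eq_nn_integral) (auto simp: nn_integral_exp_inner)

lemma
  shows integrable_cosh_inner: "integrable (mvn S 0) (\<lambda>x. cosh (a \<bullet> x))"
    and expectation_cosh_inner: "expectation (\<lambda>x. cosh (a \<bullet> x)) = exp (a \<bullet> (S *v a) / 2)"
proof -
  have cosh: "cosh (a \<bullet> x) = (exp (a \<bullet> x) + exp (- (a \<bullet> x))) / 2" for x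
    by (simp add: cosh_field_def exp_minus)
  have minus: "integrable (mvn S 0) (\<lambda>x. exp (- (a \<bullet> x)))"
    "expectation (\<lambda>x. exp (- (a \<bullet> x))) = exp (a \<bullet> (S *v a) / 2)"
    using integrable_exp_inner[of "- a"] expectation_exp_inner[of "- a"] by (simp_all add: vec.neg)
  show "integrable (mvn S 0) (\<lambda>x. cosh (a \<bullet> x))"
    unfolding cosh by (intro integrable_divide_zero Bochner_Integration.integrable_add integrable_exp_inner minus)
  show "expectation (\<lambda>x. cosh (a \<bullet> x)) = exp (a \<bullet> (S *v a) / 2)"
    unfolding cosh using integrable_exp_inner minus
    by (simp add: expectation_exp_inner)
qed

text \<open>The second moment is read off the moment generating function through
  \<open>2 k\<^sup>2 (cosh (t / k) - 1) \<longrightarrow> t\<^sup>2\<close>, by dominated convergence.\<close>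
lemma
  shows integrable_inner_sq: "integrable (mvn S 0) (\<lambda>x. (a \<bullet> x)\<^sup>2)"
    and expectation_inner_sq: "expectation (\<lambda>x. (a \<bullet> x)\<^sup>2) = a \<bullet> (S *v a)"
proof -
  define s where "s n x = 2 * (real n + 1)\<^sup>2 * (cosh ((a /\<^sub>R (real n + 1)) \<bullet> x) - 1)" for n x
  define w where "w x = 2 * (cosh ((2 *\<^sub>R a) \<bullet> x) + 1)" for x
  have [measurable]: "s n \<in> borel_measurable (mvn S 0)" for n unfolding s_def by measurable
  have w: "integrable (mvn S 0) w"
    unfolding w_def by (intro integrable_mult_right Bochner_Integration.integrable_add integrable_cosh_inner) simp
  have lim: "AE x in mvn S 0. (\<lambda>n. s n x) \<longlonglongrightarrow> (a \<bullet> x)\<^sup>2"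
    unfolding s_def inner_scaleR_left power2_eq_square[of "a \<bullet> _"] by (intro AE_I2) real_asymp
  have bound: "AE x in mvn S 0. norm (s n x) \<le> w x" for n
    using scaled_cosh_bound[of "real n + 1" "a \<bullet> x" for x] cosh_real_ge_1
    by (intro AE_I2) (simp add: s_def w_def divide_inverse_commute)
  have "integral\<^sup>L (mvn S 0) (s n) = 2 * (real n + 1)\<^sup>2 * (exp ((a \<bullet> (S *v a)) / (2 * (real n + 1)\<^sup>2)) - 1)" for n
  proof -
    have "integral\<^sup>L (mvn S 0) (s n)
        = 2 * (real n + 1)\<^sup>2 * (expectation (\<lambda>x. cosh ((a /\<^sub>R (real n + 1)) \<bullet> x)) - 1)"
      unfolding s_def using integrable_cosh_inner prob_space by (simp del: inner_scaleR_left)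
    then show ?thesis
      unfolding expectation_cosh_inner by (simp add: matrix_vector_mult_scaleR power2_eq_square field_simps)
  qed
  moreover have "(\<lambda>n. 2 * (real n + 1)\<^sup>2 * (exp ((a \<bullet> (S *v a)) / (2 * (real n + 1)\<^sup>2)) - 1)) \<longlonglongrightarrow> a \<bullet> (S *v a)"
    by real_asymp
  ultimately have "(\<lambda>n. integral\<^sup>L (mvn S 0) (s n)) \<longlonglongrightarrow> a \<bullet> (S *v a)" by simp
  moreover have "(\<lambda>n. integral\<^sup>L (mvn S 0) (s n)) \<longlonglongrightarrow> expectation (\<lambda>x. (a \<bullet> x)\<^sup>2)"
    by (rule integral_dominated_convergence[OF _ _ w lim bound]) auto
  ultimately show "expectation (\<lambda>x. (a \<bullet> x)\<^sup>2) = a \<bullet> (S *v a)"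
    by (rule LIMSEQ_unique[rotated])
  show "integrable (mvn S 0) (\<lambda>x. (a \<bullet> x)\<^sup>2)"
    by (rule integrable_dominated_convergence[OF _ _ w lim bound]) auto
qed

lemma integrable_inner: "integrable (mvn S 0) (\<lambda>x. a \<bullet> x)"
  by (rule square_integrable_imp_integrable[OF _ integrable_inner_sq]) simp

text \<open>Jensen's inequality for \<open>exp\<close> gives \<open>t E[a \<bullet> x] \<le> t\<^sup>2 (a \<bullet> S a) / 2\<close> for every \<open>t\<close>.\<close>
lemma expectation_inner_le: "0 < t \<Longrightarrow> expectation (\<lambda>x. a \<bullet> x) \<le> t * (a \<bullet> (S *v a)) / 2"
proof -
  assume "0 < t"
  have jensen: "exp (expectation (\<lambda>x. b \<bullet> x)) \<le> exp (b \<bullet> (S *v b) / 2)" for b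
    unfolding expectation_exp_inner[symmetric]
    by (rule jensens_inequality[where I=UNIV]) (auto intro: integrable_inner integrable_exp_inner exp_convex)
  have "t * expectation (\<lambda>x. a \<bullet> x) \<le> t * (t * (a \<bullet> (S *v a)) / 2)"
    using jensen[of "t *\<^sub>R a"] by (simp add: matrix_vector_mult_scaleR)
  with \<open>0 < t\<close> show ?thesis by simp
qed

lemma expectation_inner: "expectation (\<lambda>x. a \<bullet> x) = 0"
proof -
  have le0: "expectation (\<lambda>x. b \<bullet> x) \<le> 0" for b
  proof (rule field_le_epsilon)
    fix e :: real assume "0 < e"
    define t where "t = e / (\<bar>b \<bullet> (S *v b)\<bar> + 1)"
    have "0 < t" using \<open>0 < e\<close> by (simp add: t_def)
    have "t * (b \<bullet> (S *v b)) \<le> t * (\<bar>b \<bullet> (S *v b)\<bar> + 1)"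
      using \<open>0 < t\<close> by (intro mult_left_mono) auto
    also have "\<dots> = e" by (simp add: t_def)
    finally have "t * (b \<bullet> (S *v b)) / 2 \<le> e" using \<open>0 < e\<close> by simp
    then show "expectation (\<lambda>x. b \<bullet> x) \<le> 0 + e"
      using expectation_inner_le[OF \<open>0 < t\<close>, of b] by simp
  qed
  show ?thesis using le0[of a] le0[of "- a"] integrable_inner by simp
qed

lemma expectation_inner_mult_inner: "expectation (\<lambda>x. (a \<bullet> x) * (b \<bullet> x)) = a \<bullet> (S *v b)"
  and integrable_inner_mult_inner: "integrable (mvn S 0) (\<lambda>x. (a \<bullet> x) * (b \<bullet> x))"
proof -
  have polar: "(a \<bullet> x) * (b \<bullet> x) = (((a + b) \<bullet> x)\<^sup>2 - ((a - b) \<bullet> x)\<^sup>2) / 4" for x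
    by (simp add: inner_add_left inner_diff_left power2_eq_square field_simps)
  have S: "transpose S = S" using pos_def unfolding pos_def_mat_def by blast
  show "integrable (mvn S 0) (\<lambda>x. (a \<bullet> x) * (b \<bullet> x))"
    unfolding polar by (intro integrable_divide_zero Bochner_Integration.integrable_diff integrable_inner_sq)
  have "expectation (\<lambda>x. (a \<bullet> x) * (b \<bullet> x))
      = (expectation (\<lambda>x. ((a + b) \<bullet> x)\<^sup>2) - expectation (\<lambda>x. ((a - b) \<bullet> x)\<^sup>2)) / 4"
    by (simp only: polar integral_divide_zero Bochner_Integration.integral_diff[OF integrable_inner_sq integrable_inner_sq])
  also have "\<dots> = a \<bullet> (S *v b)"
    unfolding expectation_inner_sq using inner_matrix_vector_sym[OF S, of a b]
    by (simp add: matrix_vector_right_distrib matrix_vector_mult_diff_distrib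
        inner_add_left inner_add_right inner_diff_left inner_diff_right)
  finally show "expectation (\<lambda>x. (a \<bullet> x) * (b \<bullet> x)) = a \<bullet> (S *v b)" .
qed

lemma
  shows integrable_nth: "integrable (mvn S 0) (\<lambda>x. x $ i)"
    and expectation_nth: "expectation (\<lambda>x. x $ i) = 0"
  using integrable_inner[of "axis i 1"] expectation_inner[of "axis i 1"] by (simp_all add: inner_axis')

lemma
  shows integrable_nth_mult_nth: "integrable (mvn S 0) (\<lambda>x. x $ i * x $ j)"
    and expectation_nth_mult_nth: "expectation (\<lambda>x. x $ i * x $ j) = S $ i $ j"
  using integrable_inner_mult_inner[of "axis i 1" "axis j 1"] expectation_inner_mult_inner[of "axis i 1" "axis j 1"]
  by (simp_all add: inner_axis' matrix_vector_mult_basis column_def)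

end

section \<open>The conditional mixture model\<close>

lemma sum_UNIV_Plus:
  fixes f :: "'a::finite + 'b::finite \<Rightarrow> 'c::comm_monoid_add"
  shows "(\<Sum>l\<in>UNIV. f l) = (\<Sum>i\<in>UNIV. f (Inl i)) + (\<Sum>k\<in>UNIV. f (Inr k))"
  by (subst UNIV_Plus_UNIV[symmetric], subst sum.Plus) auto

lemma bind_eq_null_measure:
  assumes M: "space M \<noteq> {}" and sets: "\<And>x. x \<in> space M \<Longrightarrow> sets (f x) = sets N"
    and not_kernel: "\<And>x. x \<in> space M \<Longrightarrow> f x \<notin> space (subprob_algebra N)"
  shows "bind M f = null_measure N"
proof -
  let ?K = "subprob_algebra N"
  have K: "subprob_algebra (f (SOME x. x \<in> space M)) = ?K"
    using sets M by (intro subprob_algebra_cong) (simp add: some_in_eq)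
  have "distr M ?K f = measure_of (space ?K) (sets ?K) (\<lambda>_. 0)"
    unfolding distr_def
  proof (rule measure_of_eq)
    fix A assume "A \<in> sigma_sets (space ?K) (sets ?K)"
    then have "A \<subseteq> space ?K" by (simp add: sets.sigma_sets_eq sets.sets_into_space)
    then have "f -` A \<inter> space M = {}" using not_kernel by auto
    then show "emeasure M (f -` A \<inter> space M) = 0" by simp
  qed (rule sets.space_closed)
  then have "distr M ?K f = null_measure ?K" by (simp add: null_measure_def)
  then show ?thesis
    by (intro measure_eqI) (simp_all add: sets M bind_nonempty[OF M] K emeasure_join)
qed

lemma emeasure_distr_eq_nn_integral:
  assumes "f \<in> M \<rightarrow>\<^sub>M N" "A \<in> sets N"
  shows "emeasure (distr M N f) A = (\<integral>\<^sup>+x. indicator A (f x) \<partial>M)"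
  using assms nn_integral_distr[of f M N "indicator A"] by simp

locale conditional_mixture_model =
  fixes M :: "'w measure" and y :: "'w \<Rightarrow> real"
    and X :: "'w \<Rightarrow> real^'p" and Z :: "'w \<Rightarrow> real^'q"
    and \<mu>0 \<mu>1 :: "real^'p" and C :: "real^'p^'q" and \<Sigma> :: "real^'p^'p"
    and \<gamma>0 :: real and \<gamma>1 :: "real^'q"
  assumes prob_space_M: "prob_space M"
    and y_measurable [measurable]: "y \<in> borel_measurable M"
    and X_measurable [measurable]: "X \<in> borel_measurable M"
    and Z_measurable [measurable]: "Z \<in> borel_measurable M"
    and y_01: "\<forall>w\<in>space M. y w \<in> {0, 1}"
    and pos_def: "pos_def_mat \<Sigma>"
    and model: "distr M borel (\<lambda>w. (Z w, y w, X w)) =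
      bind (distr M borel Z) (\<lambda>z.
        bind (measure_pmf (bernoulli_pmf (logistic (\<gamma>0 + z \<bullet> \<gamma>1)))) (\<lambda>j.
          bind (mvn \<Sigma> ((if j then \<mu>1 else \<mu>0) + z v* C)) (\<lambda>x.
            return borel (z, (if j then 1 else 0), x))))"
begin

sublocale prob_space M by (rule prob_space_M)

definition cond_mean_X :: "bool \<Rightarrow> real^'q \<Rightarrow> real^'p" where
  "cond_mean_X j z = (if j then \<mu>1 else \<mu>0) + z v* C"

definition fiber :: "real^'q \<Rightarrow> bool \<Rightarrow> ((real^'q) \<times> real \<times> (real^'p)) measure" where
  "fiber z j = distr (mvn \<Sigma> 0) borel (\<lambda>u. (z, of_bool j, cond_mean_X j z + u))"

definition success_prob :: "real^'q \<Rightarrow> real" where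
  "success_prob z = logistic (\<gamma>0 + z \<bullet> \<gamma>1)"

definition fiber_mix :: "real^'q \<Rightarrow> ((real^'q) \<times> real \<times> (real^'p)) measure" where
  "fiber_mix z = bind (measure_pmf (bernoulli_pmf (success_prob z))) (fiber z)"

lemma success_prob_bounds: "0 \<le> success_prob z" "success_prob z \<le> 1"
  unfolding success_prob_def logistic_def by (auto simp: add_pos_pos)

lemma borel_measurable_success_prob [measurable]: "success_prob \<in> borel_measurable borel"
  unfolding success_prob_def logistic_def by measurable

lemma borel_measurable_cond_mean_X [measurable]: "cond_mean_X j \<in> borel_measurable borel"
  unfolding cond_mean_X_def transpose_matrix_vector[symmetric]
  by (intro borel_measurable_continuous_onI continuous_intros matrix_vector_mult_linear_continuous_on)

lemma sets_fiber [simp, measurable_cong]: "sets (fiber z j) = sets borel"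
  and space_fiber [simp]: "space (fiber z j) = UNIV"
  by (simp_all add: fiber_def)

lemma sets_fiber_mix [simp, measurable_cong]: "sets (fiber_mix z) = sets borel"
  unfolding fiber_mix_def by (rule sets_bind) auto

lemma distr_eq_bind_fiber_mix: "distr M borel (\<lambda>w. (Z w, y w, X w)) = bind (distr M borel Z) fiber_mix"
proof -
  have "bind (mvn \<Sigma> (cond_mean_X j z)) (\<lambda>x. return borel (z, of_bool j, x)) = fiber z j" for z j
    by (subst bind_return_distr') (auto simp: fiber_def distr_distr comp_def mvn_eq_distr_shift[of _ "cond_mean_X j z"])
  then show ?thesis
    unfolding model fiber_mix_def by (simp add: cond_mean_X_def success_prob_def of_bool_def)
qed

lemma emeasure_fiber_UNIV: "emeasure (fiber z j) UNIV = emeasure (mvn \<Sigma> 0) UNIV"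
  by (simp add: fiber_def emeasure_distr)

context
  assumes subprob: "subprob_space (mvn \<Sigma> 0)"
begin

lemma measurable_fiber [measurable]: "(\<lambda>z. fiber z j) \<in> borel \<rightarrow>\<^sub>M subprob_algebra borel"
  unfolding fiber_def
proof (rule measurable_distr2[where M="mvn \<Sigma> 0"])
  show "(\<lambda>z. mvn \<Sigma> 0) \<in> borel \<rightarrow>\<^sub>M subprob_algebra (mvn \<Sigma> 0)"
    using subprob by (simp add: space_subprob_algebra)
  show "(\<lambda>(z, u). (z, of_bool j :: real, cond_mean_X j z + u)) \<in> borel \<Otimes>\<^sub>M mvn \<Sigma> 0 \<rightarrow>\<^sub>M borel"
    by (simp only: measurable_cong_sets[OF sets_pair_measure_cong[OF refl sets_mvn] refl]) measurable
qed

lemma fiber_kernel: "fiber z \<in> measure_pmf p \<rightarrow>\<^sub>M subprob_algebra borel"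
  using measurable_space[OF measurable_fiber] by auto

lemma emeasure_fiber_mix:
  assumes "A \<in> sets borel"
  shows "emeasure (fiber_mix z) A
    = emeasure (fiber z True) A * success_prob z + emeasure (fiber z False) A * (1 - success_prob z)"
  unfolding fiber_mix_def using assms success_prob_bounds
  by (subst emeasure_bind[OF _ fiber_kernel]) auto

lemma measurable_fiber_mix [measurable]: "fiber_mix \<in> borel \<rightarrow>\<^sub>M subprob_algebra borel"
proof (rule measurable_subprob_algebra)
  show "subprob_space (fiber_mix z)" for z
    unfolding fiber_mix_def
    by (rule subprob_space_bind[OF _ fiber_kernel]) (simp add: prob_space_imp_subprob_space prob_space_measure_pmf)
  fix A :: "((real^'q) \<times> real \<times> (real^'p)) set" assume A [measurable]: "A \<in> sets borel"
  show "(\<lambda>z. emeasure (fiber_mix z) A) \<in> borel_measurable borel"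
    unfolding emeasure_fiber_mix[OF A] by measurable
qed simp

lemma nn_integral_fiber_mix:
  assumes [measurable]: "F \<in> borel_measurable borel"
  shows "(\<integral>\<^sup>+x. F x \<partial>fiber_mix z) =
     (\<integral>\<^sup>+u. F (z, 1, cond_mean_X True z + u) \<partial>mvn \<Sigma> 0) * success_prob z
       + (\<integral>\<^sup>+u. F (z, 0, cond_mean_X False z + u) \<partial>mvn \<Sigma> 0) * (1 - success_prob z)"
  unfolding fiber_mix_def using success_prob_bounds
  by (subst nn_integral_bind[OF _ fiber_kernel]) (auto simp: fiber_def nn_integral_distr)

lemma nn_integral_model:
  assumes [measurable]: "F \<in> borel_measurable borel"
  shows "(\<integral>\<^sup>+w. F (Z w, y w, X w) \<partial>M) = (\<integral>\<^sup>+z. \<integral>\<^sup>+x. F x \<partial>fiber_mix z \<partial>distr M borel Z)"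
proof -
  have "(\<integral>\<^sup>+w. F (Z w, y w, X w) \<partial>M) = (\<integral>\<^sup>+x. F x \<partial>distr M borel (\<lambda>w. (Z w, y w, X w)))"
    by (subst nn_integral_distr) auto
  then show ?thesis
    unfolding distr_eq_bind_fiber_mix by (subst (asm) nn_integral_bind[where B=borel]) auto
qed

end

text \<open>The hypotheses alone force the Gaussian density to be normalized: if \<open>mvn \<Sigma> 0\<close> had
  total mass \<open>K \<noteq> 1\<close>, the right-hand side of the model equation would have mass \<open>K\<close>, or
  would collapse to the null measure when \<open>K > 1\<close> makes the kernels improper.\<close>
lemma prob_space_mvn: "prob_space (mvn \<Sigma> 0)"
proof (cases "emeasure (mvn \<Sigma> 0) UNIV \<le> 1")
  case True
  then have subprob: "subprob_space (mvn \<Sigma> 0)" by (intro subprob_spaceI) auto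
  have "(\<integral>\<^sup>+x. 1 \<partial>fiber_mix z) = emeasure (mvn \<Sigma> 0) UNIV" for z
  proof -
    have "(\<integral>\<^sup>+x. 1 \<partial>fiber_mix z)
        = emeasure (mvn \<Sigma> 0) UNIV * (ennreal (success_prob z) + ennreal (1 - success_prob z))"
      using nn_integral_fiber_mix[OF subprob, of "\<lambda>_. 1" z] by (simp add: distrib_left mult.commute)
    also have "ennreal (success_prob z) + ennreal (1 - success_prob z) = 1"
      using success_prob_bounds[of z] by (subst ennreal_plus[symmetric]) auto
    finally show ?thesis by simp
  qed
  then have "1 = (\<integral>\<^sup>+z. emeasure (mvn \<Sigma> 0) UNIV \<partial>distr M borel Z)"
    using nn_integral_model[OF subprob, of "\<lambda>_. 1"] emeasure_space_1 by simp
  also have "\<dots> = emeasure (mvn \<Sigma> 0) UNIV"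
    by (simp add: emeasure_distr emeasure_space_1)
  finally show ?thesis by (intro prob_spaceI) simp
next
  case False
  have "fiber z j \<notin> space (subprob_algebra borel)" for z j
    using False subprob_space.emeasure_space_le_1[of "fiber z j"]
    by (auto simp: space_subprob_algebra emeasure_fiber_UNIV)
  then have "fiber_mix = (\<lambda>_. null_measure borel)"
    unfolding fiber_mix_def by (intro ext bind_eq_null_measure) auto
  then have "distr M borel (\<lambda>w. (Z w, y w, X w)) = null_measure borel"
    unfolding distr_eq_bind_fiber_mix
    by (simp add: bind_const' prob_space_distr subprob_space_null_measure)
  then have "emeasure (distr M borel (\<lambda>w. (Z w, y w, X w))) UNIV = 0" by simp
  then show ?thesis by (simp add: emeasure_distr emeasure_space_1)
qed

definition noise_of :: "(real^'q) \<times> real \<times> (real^'p) \<Rightarrow> real^'p" where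
  "noise_of = (\<lambda>(z, c, x). x - \<mu>0 - c *\<^sub>R (\<mu>1 - \<mu>0) - z v* C)"

definition noise :: "'w \<Rightarrow> real^'p" where
  "noise w = noise_of (Z w, y w, X w)"

lemma borel_measurable_noise_of [measurable]: "noise_of \<in> borel_measurable borel"
  unfolding noise_of_def case_prod_beta' transpose_matrix_vector[symmetric]
  by (intro borel_measurable_continuous_onI continuous_intros
      continuous_on_compose2[OF matrix_vector_mult_linear_continuous_on]) auto

lemma measurable_noise [measurable]: "noise \<in> borel_measurable M"
  unfolding noise_def by measurable

lemma noise_of_fiber: "noise_of (z, of_bool j, cond_mean_X j z + u) = u"
  by (cases j) (simp_all add: noise_of_def cond_mean_X_def algebra_simps)

text \<open>Disintegration along \<open>Z\<close>: in each fibre the noise is \<open>mvn \<Sigma> 0\<close> whatever the value of \<open>y\<close>.\<close>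
lemma nn_integral_mult_noise_disintegrate:
  fixes \<psi> :: "(real^'q) \<times> real \<Rightarrow> ennreal" and \<phi> :: "real^'p \<Rightarrow> ennreal"
  assumes [measurable]: "\<psi> \<in> borel_measurable borel" "\<phi> \<in> borel_measurable borel"
  shows "(\<integral>\<^sup>+w. \<psi> (Z w, y w) * \<phi> (noise w) \<partial>M)
    = (\<integral>\<^sup>+z. \<psi> (z, 1) * success_prob z + \<psi> (z, 0) * (1 - success_prob z) \<partial>distr M borel Z)
      * (\<integral>\<^sup>+u. \<phi> u \<partial>mvn \<Sigma> 0)"
proof -
  note subprob = prob_space_imp_subprob_space[OF prob_space_mvn]
  have \<phi>: "\<phi> \<in> borel_measurable (mvn \<Sigma> 0)" by simp
  define G where "G p = \<psi> (fst p, fst (snd p)) * \<phi> (noise_of p)" for p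
  have zc: "(\<lambda>p :: (real^'q) \<times> real \<times> (real^'p). (fst p, fst (snd p))) \<in> borel_measurable borel"
    by (intro borel_measurable_continuous_onI continuous_intros)
  have G [measurable]: "G \<in> borel_measurable borel"
    unfolding G_def
    by (intro borel_measurable_times_ennreal measurable_compose[OF zc]
        measurable_compose[OF borel_measurable_noise_of]) simp_all
  have G_fiber: "G (z, of_bool j, cond_mean_X j z + u) = \<psi> (z, of_bool j) * \<phi> u" for z j u
    by (simp add: G_def noise_of_fiber)
  have "(\<integral>\<^sup>+w. \<psi> (Z w, y w) * \<phi> (noise w) \<partial>M) = (\<integral>\<^sup>+z. \<integral>\<^sup>+x. G x \<partial>fiber_mix z \<partial>distr M borel Z)"
    using nn_integral_model[OF subprob G] by (simp add: G_def noise_def)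
  also have "\<dots> = (\<integral>\<^sup>+z. (\<psi> (z, 1) * success_prob z + \<psi> (z, 0) * (1 - success_prob z))
      * (\<integral>\<^sup>+u. \<phi> u \<partial>mvn \<Sigma> 0) \<partial>distr M borel Z)"
    by (intro nn_integral_cong)
       (simp add: nn_integral_fiber_mix[OF subprob] G_fiber[of _ True, simplified]
        G_fiber[of _ False, simplified] nn_integral_cmult[OF \<phi>], simp add: algebra_simps)
  finally show ?thesis by (simp add: nn_integral_multc)
qed

lemma nn_integral_mult_noise:
  fixes \<psi> :: "(real^'q) \<times> real \<Rightarrow> ennreal" and \<phi> :: "real^'p \<Rightarrow> ennreal"
  assumes [measurable]: "\<psi> \<in> borel_measurable borel" "\<phi> \<in> borel_measurable borel"
  shows "(\<integral>\<^sup>+w. \<psi> (Z w, y w) * \<phi> (noise w) \<partial>M) = (\<integral>\<^sup>+w. \<psi> (Z w, y w) \<partial>M) * (\<integral>\<^sup>+u. \<phi> u \<partial>mvn \<Sigma> 0)"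
proof -
  have "emeasure (mvn \<Sigma> 0) UNIV = 1"
    using prob_space.emeasure_space_1[OF prob_space_mvn] by simp
  then show ?thesis
    using nn_integral_mult_noise_disintegrate[of \<psi> \<phi>] nn_integral_mult_noise_disintegrate[of \<psi> "\<lambda>_. 1"]
    by simp
qed

lemma distr_noise: "distr M borel noise = mvn \<Sigma> 0"
proof (rule measure_eqI)
  fix A :: "(real^'p) set" assume "A \<in> sets (distr M borel noise)"
  then have [measurable]: "A \<in> sets borel" by simp
  have "emeasure (distr M borel noise) A = (\<integral>\<^sup>+w. 1 * indicator A (noise w) \<partial>M)"
    by (subst emeasure_distr_eq_nn_integral) auto
  also have "\<dots> = emeasure (mvn \<Sigma> 0) A"
    using nn_integral_mult_noise[of "\<lambda>_. 1" "indicator A"] by (simp add: emeasure_space_1)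
  finally show "emeasure (distr M borel noise) A = emeasure (mvn \<Sigma> 0) A" .
qed simp

lemma indep_var_noise:
  fixes h :: "(real^'q) \<times> real \<Rightarrow> real" and k :: "real^'p \<Rightarrow> real"
  assumes [measurable]: "h \<in> borel_measurable borel" "k \<in> borel_measurable borel"
  shows "indep_var borel (\<lambda>w. h (Z w, y w)) borel (\<lambda>w. k (noise w))"
proof -
  let ?V = "\<lambda>w. h (Z w, y w)" and ?U = "\<lambda>w. k (noise w)"
  interpret V: prob_space "distr M borel ?V" by (rule prob_space_distr) simp
  interpret U: prob_space "distr M borel ?U" by (rule prob_space_distr) simp
  have "distr M borel ?V \<Otimes>\<^sub>M distr M borel ?U = distr M (borel \<Otimes>\<^sub>M borel) (\<lambda>w. (?V w, ?U w))"
  proof (rule pair_measure_eqI)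
    fix A B assume "A \<in> sets (distr M borel ?V)" "B \<in> sets (distr M borel ?U)"
    then have [measurable]: "A \<in> sets borel" "B \<in> sets borel" by simp_all
    have "emeasure (distr M (borel \<Otimes>\<^sub>M borel) (\<lambda>w. (?V w, ?U w))) (A \<times> B)
        = (\<integral>\<^sup>+w. indicator A (?V w) * indicator B (?U w) \<partial>M)"
      by (subst emeasure_distr_eq_nn_integral) (auto simp: indicator_times)
    also have "\<dots> = (\<integral>\<^sup>+w. indicator A (?V w) \<partial>M) * (\<integral>\<^sup>+w. indicator B (?U w) \<partial>M)"
      using nn_integral_mult_noise[of "\<lambda>v. indicator A (h v)" "\<lambda>u. indicator B (k u)"]
        nn_integral_mult_noise[of "\<lambda>_. 1" "\<lambda>u. indicator B (k u)"]
      by (simp add: emeasure_space_1)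
    finally show "emeasure (distr M borel ?V) A * emeasure (distr M borel ?U) B
        = emeasure (distr M (borel \<Otimes>\<^sub>M borel) (\<lambda>w. (?V w, ?U w))) (A \<times> B)"
      by (subst (1 2) emeasure_distr_eq_nn_integral) auto
  qed (simp_all add: V.sigma_finite_measure_axioms U.sigma_finite_measure_axioms)
  then show ?thesis by (simp add: indep_var_distribution_eq)
qed

lemma centered_gaussian_noise: "centered_gaussian \<Sigma>"
  by (rule centered_gaussian.intro[OF pos_def prob_space_mvn])

lemma
  shows integrable_noise_nth: "integrable M (\<lambda>w. noise w $ i)"
    and expectation_noise_nth: "expectation (\<lambda>w. noise w $ i) = 0"
  using centered_gaussian.integrable_nth[OF centered_gaussian_noise, of i]
    centered_gaussian.expectation_nth[OF centered_gaussian_noise, of i]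
  by (simp_all add: distr_noise[symmetric] integrable_distr_eq integral_distr)

lemma
  shows integrable_noise_nth_mult: "integrable M (\<lambda>w. noise w $ i * noise w $ j)"
    and expectation_noise_nth_mult: "expectation (\<lambda>w. noise w $ i * noise w $ j) = \<Sigma> $ i $ j"
  using centered_gaussian.integrable_nth_mult_nth[OF centered_gaussian_noise, of i j]
    centered_gaussian.expectation_nth_mult_nth[OF centered_gaussian_noise, of i j]
  by (simp_all add: distr_noise[symmetric] integrable_distr_eq integral_distr)

lemma square_integrable_noise_nth: "square_integrable (\<lambda>w. noise w $ i)"
  using integrable_noise_nth_mult[of i i] by (simp add: square_integrable_def power2_eq_square)

lemma covariance_noise_nth: "covariance (\<lambda>w. noise w $ i) (\<lambda>w. noise w $ j) = \<Sigma> $ i $ j"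
  by (simp add: covariance_eq square_integrable_noise_nth expectation_noise_nth expectation_noise_nth_mult)

lemma covariance_noise_nth_indep:
  assumes [measurable]: "h \<in> borel_measurable borel" and h: "square_integrable (\<lambda>w. h (Z w, y w))"
  shows "covariance (\<lambda>w. noise w $ i) (\<lambda>w. h (Z w, y w)) = 0"
proof -
  have nth: "(\<lambda>u::real^'p. u $ i) \<in> borel_measurable borel" by measurable
  have "expectation (\<lambda>w. h (Z w, y w) * noise w $ i) = expectation (\<lambda>w. h (Z w, y w)) * 0"
    using indep_var_lebesgue_integral[OF indep_var_noise[OF _ nth]] square_integrable_integrable[OF h]
    by (simp add: integrable_noise_nth expectation_noise_nth)
  then show ?thesis
    using h by (simp add: covariance_eq square_integrable_noise_nth expectation_noise_nth mult.commute)
qed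

lemma square_integrable_y: "square_integrable y"
proof -
  have "AE w in M. norm ((y w)\<^sup>2) \<le> norm (1::real)" using y_01 by (intro AE_I2) auto
  then have "integrable M (\<lambda>w. (y w)\<^sup>2)"
    by (intro Bochner_Integration.integrable_bound[OF integrable_const[of "1::real"]]) auto
  then show ?thesis unfolding square_integrable_def by simp
qed

lemma X_nth_eq: "X w $ i = noise w $ i + (\<mu>0 $ i + ((\<mu>1 - \<mu>0) $ i * y w + (\<Sum>k\<in>UNIV. C $ k $ i * Z w $ k)))"
  by (simp add: noise_def noise_of_def vector_matrix_mult_def algebra_simps)

definition regressors :: "'w \<Rightarrow> real^('p + 'q)" where
  "regressors w = vconcat (X w) (Z w)"

definition residual :: "real^('p + 'q) \<Rightarrow> 'w \<Rightarrow> real" where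
  "residual b w = y w - regressors w \<bullet> b"

lemma regressors_nth [simp]:
  "regressors w $ Inl i = X w $ i" "regressors w $ Inr k = Z w $ k"
  by (simp_all add: regressors_def vconcat_def)

context
  assumes Z_square_integrable: "\<forall>k. integrable M (\<lambda>w. (Z w $ k)\<^sup>2)"
begin

lemma square_integrable_Z_nth: "square_integrable (\<lambda>w. Z w $ k)"
  using Z_square_integrable by (simp add: square_integrable_def)

lemma square_integrable_X_nth: "square_integrable (\<lambda>w. X w $ i)"
  unfolding X_nth_eq
  by (intro square_integrable_add square_integrable_const square_integrable_cmult square_integrable_sum
      square_integrable_noise_nth square_integrable_y square_integrable_Z_nth)

lemma square_integrable_regressors_nth: "square_integrable (\<lambda>w. regressors w $ l)"
  by (cases l) (simp_all add: square_integrable_X_nth square_integrable_Z_nth)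

lemma covariance_noise_Z_nth: "covariance (\<lambda>w. noise w $ i) (\<lambda>w. Z w $ k) = 0"
proof -
  have h: "(\<lambda>p::(real^'q) \<times> real. fst p $ k) \<in> borel_measurable borel"
    by (simp only: cart_eq_inner_axis) (intro borel_measurable_continuous_onI continuous_intros)
  then show ?thesis using covariance_noise_nth_indep[OF h] square_integrable_Z_nth by simp
qed

lemma covariance_noise_y: "covariance (\<lambda>w. noise w $ i) y = 0"
proof -
  have h: "(snd :: (real^'q) \<times> real \<Rightarrow> real) \<in> borel_measurable borel"
    by (intro borel_measurable_continuous_onI continuous_intros)
  then show ?thesis using covariance_noise_nth_indep[OF h] square_integrable_y by simp
qed

lemma covariance_noise_X_nth: "covariance (\<lambda>w. noise w $ i) (\<lambda>w. X w $ j) = \<Sigma> $ i $ j"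
proof -
  note sq = square_integrable_noise_nth square_integrable_y square_integrable_Z_nth
    square_integrable_const square_integrable_add square_integrable_cmult square_integrable_sum
  have "covariance (\<lambda>w. noise w $ i) (\<lambda>w. X w $ j)
      = covariance (\<lambda>w. noise w $ i) (\<lambda>w. noise w $ j) + (covariance (\<lambda>w. noise w $ i) (\<lambda>_. \<mu>0 $ j)
        + ((\<mu>1 - \<mu>0) $ j * covariance (\<lambda>w. noise w $ i) y
        + (\<Sum>k\<in>UNIV. C $ k $ j * covariance (\<lambda>w. noise w $ i) (\<lambda>w. Z w $ k))))"
    unfolding X_nth_eq by (simp only: sq covariance_add_right covariance_cmult_right covariance_sum_right)
  then show ?thesis
    by (simp add: covariance_noise_nth covariance_const_right covariance_noise_y covariance_noise_Z_nth sq)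
qed

lemma cov_mat_noise_regressors_mult:
  "cov_mat M noise regressors *v b = \<Sigma> *v (\<chi> j. b $ Inl j)"
proof -
  have "(\<Sum>l\<in>UNIV. covariance (\<lambda>w. noise w $ i) (\<lambda>w. regressors w $ l) * b $ l)
      = (\<Sum>j\<in>UNIV. \<Sigma> $ i $ j * b $ Inl j)" for i
    by (simp add: sum_UNIV_Plus covariance_noise_X_nth covariance_noise_Z_nth)
  then show ?thesis by (simp add: vec_eq_iff matrix_vector_mult_def cov_mat_nth)
qed

lemma covariance_noise_residual:
  "covariance (\<lambda>w. noise w $ i) (residual b) = - (\<Sigma> *v (\<chi> j. b $ Inl j)) $ i"
proof -
  have "covariance (\<lambda>w. noise w $ i) (residual b) = cov_vec M noise (residual b) $ i"
    by (simp add: cov_vec_nth)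
  also have "\<dots> = (cov_vec M noise y - cov_mat M noise regressors *v b) $ i"
    unfolding residual_def
    by (simp add: cov_vec_diff_right cov_vec_inner_right square_integrable_inner_right
        square_integrable_noise_nth square_integrable_regressors_nth square_integrable_y)
  finally show ?thesis
    by (simp add: cov_mat_noise_regressors_mult cov_vec_nth covariance_noise_y)
qed

lemma Sigma_mult_regression_coefficient:
  assumes normal: "cov_mat M regressors regressors *v b = cov_vec M regressors y"
  shows "\<Sigma> *v (\<chi> j. b $ Inl j) = variance (residual b) *\<^sub>R (\<mu>1 - \<mu>0)"
proof -
  note sq = square_integrable_noise_nth square_integrable_y square_integrable_Z_nth
    square_integrable_const square_integrable_add square_integrable_cmult square_integrable_sum
  have \<epsilon>: "square_integrable (residual b)"
    unfolding residual_def
    by (intro square_integrable_diff square_integrable_y square_integrable_inner_right square_integrable_regressors_nth)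
  have orth: "cov_vec M regressors (residual b) = 0"
    and cov_y: "covariance (residual b) y = variance (residual b)"
    using cov_vec_residual[OF square_integrable_regressors_nth square_integrable_y normal]
      covariance_residual_eq_variance[OF square_integrable_regressors_nth square_integrable_y normal]
    by (simp_all add: residual_def[abs_def])
  have cov_regressors: "covariance (residual b) (\<lambda>w. regressors w $ l) = 0" for l
    using orth by (simp add: vec_eq_iff cov_vec_nth covariance_commute[of _ "residual b"])
  have cov_Z: "covariance (residual b) (\<lambda>w. Z w $ k) = 0" for k
    using cov_regressors[of "Inr k"] by simp
  have "(\<Sigma> *v (\<chi> j. b $ Inl j)) $ i = variance (residual b) * (\<mu>1 - \<mu>0) $ i" for i
  proof -
    have "0 = covariance (residual b) (\<lambda>w. X w $ i)"
      using cov_regressors[of "Inl i"] by simp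
    also have "\<dots> = covariance (residual b) (\<lambda>w. noise w $ i) + (covariance (residual b) (\<lambda>_. \<mu>0 $ i)
        + ((\<mu>1 - \<mu>0) $ i * covariance (residual b) y
        + (\<Sum>k\<in>UNIV. C $ k $ i * covariance (residual b) (\<lambda>w. Z w $ k))))"
      unfolding X_nth_eq using \<epsilon> by (simp only: sq covariance_add_right covariance_cmult_right covariance_sum_right)
    also have "\<dots> = - (\<Sigma> *v (\<chi> j. b $ Inl j)) $ i + (\<mu>1 - \<mu>0) $ i * variance (residual b)"
      using \<epsilon> covariance_noise_residual[of i] covariance_commute[of "residual b" "\<lambda>w. noise w $ i"]
      by (simp add: covariance_const_right cov_y cov_Z)
    finally show ?thesis by (simp add: mult.commute)
  qed
  then show ?thesis by (simp add: vec_eq_iff)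
qed

end

end

theorem lemma1:
  fixes M :: "'w measure"
    and y :: "'w \<Rightarrow> real"
    and X :: "'w \<Rightarrow> real^'p"
    and Z :: "'w \<Rightarrow> real^'q"
    and \<mu>0 \<mu>1 :: "real^'p"
    and C :: "real^'p^'q"
    and \<Sigma> :: "real^'p^'p"
    and \<gamma>0 :: real
    and \<gamma>1 :: "real^'q"
  assumes "prob_space M"
    and "y \<in> borel_measurable M" and "X \<in> borel_measurable M" and "Z \<in> borel_measurable M"
    and "\<forall>w\<in>space M. y w \<in> {0, 1}"
    and "pos_def_mat \<Sigma>"
    and model: "distr M borel (\<lambda>w. (Z w, y w, X w)) =
      bind (distr M borel Z) (\<lambda>z.
        bind (measure_pmf (bernoulli_pmf (logistic (\<gamma>0 + z \<bullet> \<gamma>1)))) (\<lambda>j.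
          bind (mvn \<Sigma> ((if j then \<mu>1 else \<mu>0) + z v* C)) (\<lambda>x.
            return borel (z, (if j then 1 else 0), x))))"
    and "\<forall>i. integrable M (\<lambda>w. (Z w $ i)\<^sup>2)"
    and "invertible (cov_mat M Z Z)"
    and "invertible (cov_mat M (\<lambda>w. vconcat (X w) (Z w)) (\<lambda>w. vconcat (X w) (Z w)))"
  defines "W \<equiv> (\<lambda>w. vconcat (X w) (Z w))"
  defines "b \<equiv> matrix_inv (cov_mat M W W) *v cov_vec M W y"
  defines "b1 \<equiv> (\<chi> k. b $ Inl k)"
  defines "\<epsilon> \<equiv> (\<lambda>w. y w - W w \<bullet> b)"
  defines "\<beta>1 \<equiv> matrix_inv \<Sigma> *v (\<mu>1 - \<mu>0)"
  assumes "prob_space.variance M \<epsilon> > 0"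
  shows "\<beta>1 = (1 / prob_space.variance M \<epsilon>) *\<^sub>R b1"
proof -
  interpret conditional_mixture_model M y X Z \<mu>0 \<mu>1 C \<Sigma> \<gamma>0 \<gamma>1
    using assms(1-7) by (rule conditional_mixture_model.intro)
  have W: "W = regressors" by (simp add: W_def regressors_def[abs_def])
  have "cov_mat M regressors regressors *v b = cov_vec M regressors y"
    using matrix_inv_mult_vector(1)[OF assms(10)[folded W_def]] by (simp add: b_def W)
  then have "\<Sigma> *v b1 = variance \<epsilon> *\<^sub>R (\<mu>1 - \<mu>0)"
    using Sigma_mult_regression_coefficient assms(8)
    by (simp add: b1_def \<epsilon>_def W residual_def[abs_def])
  then have "b1 = variance \<epsilon> *\<^sub>R \<beta>1"
    using matrix_inv_mult_vector(2)[OF pos_def_mat_invertible[OF pos_def], of b1]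
    by (simp add: \<beta>1_def matrix_vector_mult_scaleR)
  then show ?thesis using assms(16) by simp
qed

end
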